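(* Let $\mathcal{I}=(R,U,C,\omega)$ be an instance of Valued APEP$\langle \mathsf{BoD}_\forall,\mathsf{BoD}_\exists,\mathsf{SoD}_\exists,\mathsf{SoD}_\forall,\mathsf{Card}_{UB},\mathsf{Card}_{LB}\rangle$ with $k=|R|$, and let $\tau=\max_{(r,\ge,t)\in C}t$. Then $C$ is $3\tau k\binom{k}{2}$-wbounded. Moreover, for any complete authorization relation $A$ there exists a complete authorization relation $A^*\subseteq A$ such that $A^*$ has at most $3\tau\binom{k}{2}$ users (i.e. $|\{u:A^*(u)\neq\emptyset\}|\le 3\tau\binom{k}{2}$) and $w_C(A^* )\le w_C(A)$.
   Context: $U$ is a finite set of users, $R$ a finite set of resources; authorization relation $A\subseteq U\times R$, $A(r)=\{u:(u,r)\in A\}$, $A(u)=\{r:(u,r)\in A\}$; $A$ is complete if $A(r)\ne\emptyset$ for all $r$. A weighted constraint is $w_c:2^{U\times R}\to\mathbb{N}$; $w_C(A)=\sum_{c\in C}w_c(A)$. A Valued APEP instance $(R,U,C,\omega)$ has $\omega:U\times 2^R\to\mathbb{N}$ monotone in the second argument. For each constraint $c$, $f_c:\mathbb{Z}\to\mathbb{N}$ is nondecreasing with $f_c(z)=0$ iff $z\le 0$, and $\ell_c>0$ is a constant; $\mathrm{maxdiff}(A,r,r')=\max\{|A(r)\setminus A(r')|,|A(r')\setminus A(r)|\}$. The constraint types are: $\mathsf{Card}_{UB}$ $(r,\le,t)$ with $w_c(A)=f_c(|A(r)|-t)$; $\mathsf{Card}_{LB}$ $(r,\ge,t)$ with $w_c(A)=f_c(t-|A(r)|)$;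 $\mathsf{SoD}_\forall$ $(r,r',\updownarrow,\forall)$ with $w_c(A)=f_c(|A(r)\cap A(r')|)$; $\mathsf{BoD}_\forall$ $(r,r',\leftrightarrow,\forall)$ with $w_c(A)=f_c(\mathrm{maxdiff}(A,r,r'))$; $\mathsf{SoD}_\exists$ $(r,r',\updownarrow,\exists)$ with $w_c(A)=0$ if $A(r)\neq A(r')$ and $\ell_c$ otherwise; $\mathsf{BoD}_\exists$ $(r,r',\leftrightarrow,\exists)$ with $w_c(A)=0$ if $A(r)\cap A(r')\ne\emptyset$ and $\ell_c$ otherwise. Valued APEP$\langle X\rangle$ denotes instances all of whose constraints have types in $X$. $C$ is $t$-wbounded if for every complete $A$ with $|A|>t$ there is a complete $A'\subseteq A$ with $|A'|<|A|$ and $w_C(A')\le w_C(A)$. *)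

theory Defs
  imports Main
begin

datatype 'r constr =
    CardUB 'r nat "int \<Rightarrow> nat"
  | CardLB 'r nat "int \<Rightarrow> nat"
  | SoDAll 'r 'r "int \<Rightarrow> nat"
  | BoDAll 'r 'r "int \<Rightarrow> nat"
  | SoDEx 'r 'r nat
  | BoDEx 'r 'r nat

definition usersOf :: "('u \<times> 'r) set \<Rightarrow> 'r \<Rightarrow> 'u set" where
  "usersOf A r = {u. (u, r) \<in> A}"

definition resOf :: "('u \<times> 'r) set \<Rightarrow> 'u \<Rightarrow> 'r set" where
  "resOf A u = {r. (u, r) \<in> A}"

definition complete :: "'r set \<Rightarrow> ('u \<times> 'r) set \<Rightarrow> bool" where
  "complete R A \<longleftrightarrow> (\<forall>r\<in>R. usersOf A r \<noteq> {})"

definition maxdiff :: "('u \<times> 'r) set \<Rightarrow> 'r \<Rightarrow> 'r \<Rightarrow> nat" where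
  "maxdiff A r r' = max (card (usersOf A r - usersOf A r')) (card (usersOf A r' - usersOf A r))"

fun weight :: "'r constr \<Rightarrow> ('u \<times> 'r) set \<Rightarrow> nat" where
  "weight (CardUB r t f) A = f (int (card (usersOf A r)) - int t)"
| "weight (CardLB r t f) A = f (int t - int (card (usersOf A r)))"
| "weight (SoDAll r r' f) A = f (int (card (usersOf A r \<inter> usersOf A r')))"
| "weight (BoDAll r r' f) A = f (int (maxdiff A r r'))"
| "weight (SoDEx r r' l) A = (if usersOf A r \<noteq> usersOf A r' then 0 else l)"
| "weight (BoDEx r r' l) A = (if usersOf A r \<inter> usersOf A r' \<noteq> {} then 0 else l)"

definition wC :: "'r constr set \<Rightarrow> ('u \<times> 'r) set \<Rightarrow> nat" where
  "wC C A = (\<Sum>c\<in>C. weight c A)"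

definition penalty_fun :: "(int \<Rightarrow> nat) \<Rightarrow> bool" where
  "penalty_fun f \<longleftrightarrow> mono f \<and> (\<forall>z. f z = 0 \<longleftrightarrow> z \<le> 0)"

fun valid_constr :: "'r set \<Rightarrow> 'r constr \<Rightarrow> bool" where
  "valid_constr R (CardUB r t f) = (r \<in> R \<and> penalty_fun f)"
| "valid_constr R (CardLB r t f) = (r \<in> R \<and> penalty_fun f)"
| "valid_constr R (SoDAll r r' f) = (r \<in> R \<and> r' \<in> R \<and> penalty_fun f)"
| "valid_constr R (BoDAll r r' f) = (r \<in> R \<and> r' \<in> R \<and> penalty_fun f)"
| "valid_constr R (SoDEx r r' l) = (r \<in> R \<and> r' \<in> R \<and> l > 0)"
| "valid_constr R (BoDEx r r' l) = (r \<in> R \<and> r' \<in> R \<and> l > 0)"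

definition valued_apep :: "'r set \<Rightarrow> 'u set \<Rightarrow> 'r constr set \<Rightarrow> ('u \<Rightarrow> 'r set \<Rightarrow> nat) \<Rightarrow> bool" where
  "valued_apep R U C \<omega> \<longleftrightarrow> finite R \<and> finite U \<and> finite C \<and> (\<forall>c\<in>C. valid_constr R c)
     \<and> (\<forall>u S T. S \<subseteq> T \<longrightarrow> \<omega> u S \<le> \<omega> u T)"

definition wbounded :: "'r set \<Rightarrow> 'u set \<Rightarrow> 'r constr set \<Rightarrow> nat \<Rightarrow> bool" where
  "wbounded R U C t \<longleftrightarrow>
     (\<forall>A. A \<subseteq> U \<times> R \<longrightarrow> complete R A \<longrightarrow> card A > t \<longrightarrow>
        (\<exists>A'. A' \<subseteq> A \<and> complete R A' \<and> card A' < card A \<and> wC C A' \<le> wC C A))"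

text \<open>tau = max t over lower-bound cardinality constraints (r, >=, t) in C,
  with the convention that tau is at least 1.\<close>
definition tau :: "'r constr set \<Rightarrow> nat" where
  "tau C = Max ({1} \<union> {t. \<exists>r f. CardLB r t f \<in> C})"

end

theory Submission
  imports Defs
begin

text \<open>Restricting A to a set S of users never makes a Card_UB, SoD_forall or BoD_forall
  constraint heavier.  Neither does it make a Card_LB, SoD_exists or BoD_exists constraint on
  resources r, r' heavier, provided S keeps min(|A(r)|, tau) users of each of r, r', a common
  user of r and r' if there is one, and a user telling A(r) and A(r') apart if they differ.
  For a single pair of resources 2 tau + 1 <= 3 tau users suffice, because the common user can
  be put into both tau-subsets.  Since k >= 2 every resource lies in one of the
  binom(k,2) pairs, so the union over all pairs is a set of at most 3 tau binom(k,2) users that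
  works for all constraints, and the restricted relation has at most 3 tau k binom(k,2) pairs.\<close>

lemma usersOf_restrict_users [simp]: "usersOf (A \<inter> S \<times> UNIV) r = usersOf A r \<inter> S"
  by (auto simp: usersOf_def)

lemma finite_usersOf: "finite A \<Longrightarrow> finite (usersOf A r)"
  by (rule finite_subset[OF _ finite_Domain]) (auto simp: usersOf_def)

lemma finite_CardLB_thresholds: "finite C \<Longrightarrow> finite {t. \<exists>r f. CardLB r t f \<in> C}"
proof -
  assume "finite C"
  moreover have "{t. \<exists>r f. CardLB r t f \<in> C} \<subseteq> (\<lambda>c. case c of CardLB r t f \<Rightarrow> t | _ \<Rightarrow> 0) ` C"
    by force
  ultimately show ?thesis
    by (meson finite_imageI finite_subset)
qed

lemma one_le_tau: "finite C \<Longrightarrow> 1 \<le> tau C"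
  unfolding tau_def by (intro Max_ge) (auto simp: finite_CardLB_thresholds)

lemma CardLB_le_tau: "finite C \<Longrightarrow> CardLB r t f \<in> C \<Longrightarrow> t \<le> tau C"
  unfolding tau_def by (intro Max_ge) (auto simp: finite_CardLB_thresholds)

definition witness_set :: "nat \<Rightarrow> ('u \<times> 'r) set \<Rightarrow> 'u set \<Rightarrow> 'r set \<Rightarrow> bool" where
  "witness_set \<tau> A S B \<longleftrightarrow> (\<forall>r\<in>B. \<forall>r'\<in>B.
      min (card (usersOf A r)) \<tau> \<le> card (usersOf A r \<inter> S)
    \<and> (usersOf A r \<inter> usersOf A r' \<noteq> {} \<longrightarrow> usersOf A r \<inter> usersOf A r' \<inter> S \<noteq> {})
    \<and> (usersOf A r \<noteq> usersOf A r' \<longrightarrow> usersOf A r \<inter> S \<noteq> usersOf A r' \<inter> S))"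

lemma Int_nonempty_if_min_card_le:
  assumes "min (card M) \<tau> \<le> card (M \<inter> S)" "1 \<le> \<tau>" "finite M" "M \<noteq> {}"
  shows "M \<inter> S \<noteq> {}"
proof -
  have "1 \<le> card M" using assms(3,4) by (simp add: Suc_le_eq card_gt_0_iff)
  then show ?thesis using assms(1,2) by auto
qed

lemma witness_set_mono:
  assumes "witness_set \<tau> A S B" "S \<subseteq> S'" "finite A"
  shows "witness_set \<tau> A S' B"
proof -
  have "card (usersOf A r \<inter> S) \<le> card (usersOf A r \<inter> S')" for r
    using assms(2,3) by (intro card_mono) (auto simp: finite_usersOf)
  with assms(1,2) show ?thesis
    unfolding witness_set_def by (blast intro: le_trans)
qed

lemma obtain_subset_card_le_1:
  obtains W where "W \<subseteq> M" "card W \<le> 1" "M \<noteq> {} \<Longrightarrow> W \<noteq> {}"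
proof (cases "M = {}")
  case True
  then show ?thesis using that[of "{}"] by simp
next
  case False
  then obtain x where "x \<in> M" by blast
  then show ?thesis using that[of "{x}"] by simp
qed

lemma witness_set_pair_exists:
  assumes "finite A" "1 \<le> \<tau>"
  obtains G where "finite G" "card G \<le> 3 * \<tau>" "witness_set \<tau> A G {r, r'}"
proof -
  define X where "X = usersOf A r"
  define Y where "Y = usersOf A r'"
  have fin: "finite X" "finite Y" unfolding X_def Y_def using assms(1) by (simp_all add: finite_usersOf)
  obtain c where c: "c \<subseteq> X \<inter> Y" "card c \<le> 1" "X \<inter> Y \<noteq> {} \<Longrightarrow> c \<noteq> {}"
    using obtain_subset_card_le_1[of "X \<inter> Y"] by blast
  obtain d where d: "d \<subseteq> (X - Y) \<union> (Y - X)" "card d \<le> 1" "(X - Y) \<union> (Y - X) \<noteq> {} \<Longrightarrow> d \<noteq> {}"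
    using obtain_subset_card_le_1[of "(X - Y) \<union> (Y - X)"] by blast
  have "card c \<le> card X" "card c \<le> card Y"
    using c(1) fin card_mono[of X c] card_mono[of Y c] by auto
  then obtain T T' where T: "c \<subseteq> T" "T \<subseteq> X" "card T = min (card X) \<tau>"
    and T': "c \<subseteq> T'" "T' \<subseteq> Y" "card T' = min (card Y) \<tau>"
    using exists_subset_between[of c "min (card X) \<tau>" X] exists_subset_between[of c "min (card Y) \<tau>" Y]
      fin c(1,2) assms(2) by auto
  define G where "G = T \<union> T' \<union> d"
  have fin_parts: "finite T" "finite T'" "finite d"
    using finite_subset T(2) T'(2) d(1) fin by blast+
  have "card G \<le> card T + card T' + card d"
    unfolding G_def using card_Un_le[of T T'] card_Un_le[of "T \<union> T'" d] by linarith
  also have "\<dots> \<le> 3 * \<tau>" using T(3) T'(3) d(2) assms(2) by linarith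
  finally have "card G \<le> 3 * \<tau>" .
  moreover have "finite G" unfolding G_def using fin_parts by simp
  moreover have "witness_set \<tau> A G {r, r'}"
  proof -
    have min_X: "min (card X) \<tau> \<le> card (X \<inter> G)"
      using T card_mono[of "X \<inter> G" T] fin(1) by (auto simp: G_def)
    have min_Y: "min (card Y) \<tau> \<le> card (Y \<inter> G)"
      using T' card_mono[of "Y \<inter> G" T'] fin(2) by (auto simp: G_def)
    have "X \<inter> Y \<noteq> {} \<Longrightarrow> X \<inter> Y \<inter> G \<noteq> {}"
      using c T(1) by (auto simp: G_def)
    moreover have "X \<noteq> Y \<Longrightarrow> X \<inter> G \<noteq> Y \<inter> G"
      using d by (auto simp: G_def)
    moreover have "X \<noteq> {} \<Longrightarrow> X \<inter> G \<noteq> {}" "Y \<noteq> {} \<Longrightarrow> Y \<inter> G \<noteq> {}"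
      using Int_nonempty_if_min_card_le min_X min_Y assms(2) fin by blast+
    ultimately show ?thesis
      using min_X min_Y unfolding witness_set_def X_def Y_def by (auto simp: Int_commute)
  qed
  ultimately show ?thesis using that by blast
qed

lemma two_subset_containing:
  assumes "2 \<le> card R" "r \<in> R" "r' \<in> R"
  obtains B where "B \<subseteq> R" "card B = 2" "r \<in> B" "r' \<in> B"
proof (cases "r = r'")
  case True
  have "R \<noteq> {r}" using assms(1) by auto
  then obtain r'' where "r'' \<in> R" "r'' \<noteq> r" using assms(2) by blast
  then show ?thesis using that[of "{r, r''}"] True assms(2) by auto
next
  case False
  then show ?thesis using that[of "{r, r'}"] assms(2,3) by auto
qed

lemma witness_set_of_pairs:
  assumes "2 \<le> card R" "\<And>B. B \<subseteq> R \<Longrightarrow> card B = 2 \<Longrightarrow> witness_set \<tau> A S B"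
  shows "witness_set \<tau> A S R"
  unfolding witness_set_def
proof (intro ballI)
  fix r r' assume "r \<in> R" "r' \<in> R"
  then obtain B where B: "B \<subseteq> R" "card B = 2" and "r \<in> B" "r' \<in> B"
    using two_subset_containing[OF assms(1)] by metis
  with assms(2)[OF B] show "min (card (usersOf A r)) \<tau> \<le> card (usersOf A r \<inter> S)
    \<and> (usersOf A r \<inter> usersOf A r' \<noteq> {} \<longrightarrow> usersOf A r \<inter> usersOf A r' \<inter> S \<noteq> {})
    \<and> (usersOf A r \<noteq> usersOf A r' \<longrightarrow> usersOf A r \<inter> S \<noteq> usersOf A r' \<inter> S)"
    unfolding witness_set_def by blast
qed

lemma witness_set_exists:
  assumes "2 \<le> card R" "finite A" "1 \<le> \<tau>"
  obtains S where "finite S" "card S \<le> 3 * \<tau> * (card R choose 2)" "witness_set \<tau> A S R"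
proof -
  define P where "P = {B. B \<subseteq> R \<and> card B = 2}"
  have finR: "finite R" using assms(1) card.infinite by fastforce
  have "\<forall>B\<in>P. \<exists>G. finite G \<and> card G \<le> 3 * \<tau> \<and> witness_set \<tau> A G B"
  proof
    fix B assume "B \<in> P"
    obtain r r' where "B = {r, r'}" using \<open>B \<in> P\<close> by (auto simp: P_def card_2_iff)
    then show "\<exists>G. finite G \<and> card G \<le> 3 * \<tau> \<and> witness_set \<tau> A G B"
      using witness_set_pair_exists[OF assms(2,3)] by metis
  qed
  then obtain G where G: "\<And>B. B \<in> P \<Longrightarrow> finite (G B) \<and> card (G B) \<le> 3 * \<tau> \<and> witness_set \<tau> A (G B) B"
    by (metis bchoice)
  define S where "S = (\<Union>B\<in>P. G B)"
  have finP: "finite P" unfolding P_def using finR by simp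
  have "card S \<le> (\<Sum>B\<in>P. card (G B))" unfolding S_def using finP by (rule card_UN_le)
  also have "\<dots> \<le> card P * (3 * \<tau>)" using sum_bounded_above[of P "\<lambda>B. card (G B)"] G by simp
  also have "card P = card R choose 2" unfolding P_def using n_subsets[OF finR] .
  finally have "card S \<le> 3 * \<tau> * (card R choose 2)" by (simp add: ac_simps)
  moreover have "finite S" unfolding S_def using finP G by blast
  moreover have "witness_set \<tau> A S R"
  proof (rule witness_set_of_pairs[OF assms(1)])
    fix B assume "B \<subseteq> R" "card B = 2"
    then have "B \<in> P" by (simp add: P_def)
    then show "witness_set \<tau> A S B"
      using G witness_set_mono assms(2) unfolding S_def by blast
  qed
  ultimately show ?thesis using that by blast
qed

lemma maxdiff_restrict_users_le:
  assumes "finite A"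
  shows "maxdiff (A \<inter> S \<times> UNIV) r r' \<le> maxdiff A r r'"
proof -
  have le: "card (usersOf A x \<inter> S - usersOf A y \<inter> S) \<le> card (usersOf A x - usersOf A y)" for x y
    using assms by (intro card_mono) (auto simp: finite_usersOf)
  show ?thesis unfolding maxdiff_def usersOf_restrict_users by (intro max.mono le)
qed

lemma CardLB_weight_restrict_users_le:
  assumes "penalty_fun f" "t \<le> \<tau>" "min (card (usersOf A r)) \<tau> \<le> card (usersOf A r \<inter> S)"
  shows "weight (CardLB r t f) (A \<inter> S \<times> UNIV) \<le> weight (CardLB r t f) A"
proof (cases "t \<le> card (usersOf A r \<inter> S)")
  case True
  then have "f (int t - int (card (usersOf A r \<inter> S))) = 0"
    using assms(1) by (simp add: penalty_fun_def)
  then show ?thesis by simp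
next
  case False
  then have "card (usersOf A r) \<le> card (usersOf A r \<inter> S)" using assms(2,3) by linarith
  then show ?thesis using assms(1) by (auto simp: penalty_fun_def intro: monoD)
qed

lemma weight_restrict_users_le:
  assumes "valid_constr R c" "finite A" "witness_set \<tau> A S R"
    and "\<And>r t f. c = CardLB r t f \<Longrightarrow> t \<le> \<tau>"
  shows "weight c (A \<inter> S \<times> UNIV) \<le> weight c A"
proof (cases c)
  case (CardUB r t f)
  have "card (usersOf A r \<inter> S) \<le> card (usersOf A r)"
    using assms(2) by (intro card_mono) (auto simp: finite_usersOf)
  then show ?thesis using assms(1) by (auto simp: CardUB penalty_fun_def intro: monoD)
next
  case (CardLB r t f)
  have "t \<le> \<tau>" using assms(4) CardLB by blast
  moreover have "penalty_fun f" "r \<in> R" using assms(1) by (simp_all add: CardLB)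
  ultimately show ?thesis unfolding CardLB using assms(3)
    by (intro CardLB_weight_restrict_users_le) (auto simp: witness_set_def)
next
  case (SoDAll r r' f)
  have "card (usersOf A r \<inter> S \<inter> (usersOf A r' \<inter> S)) \<le> card (usersOf A r \<inter> usersOf A r')"
    using assms(2) by (intro card_mono) (auto simp: finite_usersOf)
  then show ?thesis using assms(1) by (auto simp: SoDAll penalty_fun_def intro: monoD)
next
  case (BoDAll r r' f)
  then show ?thesis using assms(1) maxdiff_restrict_users_le[OF assms(2)]
    by (auto simp: penalty_fun_def intro: monoD)
next
  case (SoDEx r r' l)
  then show ?thesis using assms(1,3) by (auto simp: witness_set_def)
next
  case (BoDEx r r' l)
  then show ?thesis using assms(1,3) by (auto simp: witness_set_def Int_assoc)
qed

lemma wC_restrict_users_le: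
  assumes "\<forall>c\<in>C. valid_constr R c" "finite C" "finite A" "witness_set (tau C) A S R"
  shows "wC C (A \<inter> S \<times> UNIV) \<le> wC C A"
  unfolding wC_def using assms CardLB_le_tau
  by (intro sum_mono weight_restrict_users_le[where \<tau> = "tau C"]) auto

lemma complete_restrict_users:
  assumes "complete R A" "finite A" "witness_set \<tau> A S R" "1 \<le> \<tau>"
  shows "complete R (A \<inter> S \<times> UNIV)"
  using assms Int_nonempty_if_min_card_le[OF _ assms(4) finite_usersOf[OF assms(2)]]
  by (auto simp: complete_def witness_set_def)

lemma restrict_to_few_users:
  assumes "valued_apep R U C \<omega>" "2 \<le> card R" "A \<subseteq> U \<times> R" "complete R A"
  obtains S where "card S \<le> 3 * tau C * (card R choose 2)" "finite S"
    "complete R (A \<inter> S \<times> UNIV)" "wC C (A \<inter> S \<times> UNIV) \<le> wC C A"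
proof -
  have fin: "finite C" "finite A" "\<forall>c\<in>C. valid_constr R c"
    using assms(1,3) finite_subset[OF assms(3)] by (auto simp: valued_apep_def)
  obtain S where "finite S" "card S \<le> 3 * tau C * (card R choose 2)" "witness_set (tau C) A S R"
    using witness_set_exists[OF assms(2) fin(2) one_le_tau[OF fin(1)]] .
  then show ?thesis
    using that complete_restrict_users[OF assms(4) fin(2) _ one_le_tau[OF fin(1)]]
      wC_restrict_users_le[OF fin(3,1,2)] by blast
qed

lemma card_restrict_users_le:
  assumes "A \<subseteq> U \<times> R" "finite S" "finite R"
  shows "card (A \<inter> S \<times> UNIV) \<le> card S * card R"
proof -
  have "card (A \<inter> S \<times> UNIV) \<le> card (S \<times> R)"
    using assms by (intro card_mono) auto
  then show ?thesis by (simp add: card_cartesian_product)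
qed

lemma card_users_restrict_users_le:
  "finite S \<Longrightarrow> card {u. resOf (A \<inter> S \<times> UNIV) u \<noteq> {}} \<le> card S"
  by (rule card_mono) (auto simp: resOf_def)

theorem lemma4p6:
  fixes R :: "'r set" and U :: "'u set" and C :: "'r constr set" and \<omega> :: "'u \<Rightarrow> 'r set \<Rightarrow> nat"
  assumes inst: "valued_apep R U C \<omega>"
    and k2: "card R \<ge> 2"
  shows "wbounded R U C (3 * tau C * card R * (card R choose 2))
       \<and> (\<forall>A. A \<subseteq> U \<times> R \<longrightarrow> complete R A \<longrightarrow>
            (\<exists>A'. A' \<subseteq> A \<and> complete R A'
                 \<and> card {u. resOf A' u \<noteq> {}} \<le> 3 * tau C * (card R choose 2)
                 \<and> wC C A' \<le> wC C A))"
proof (intro conjI allI impI)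
  have finR: "finite R" using k2 card.infinite by fastforce
  show "wbounded R U C (3 * tau C * card R * (card R choose 2))"
    unfolding wbounded_def
  proof (intro allI impI)
    fix A assume A: "A \<subseteq> U \<times> R" "complete R A" "3 * tau C * card R * (card R choose 2) < card A"
    obtain S where S: "card S \<le> 3 * tau C * (card R choose 2)" "finite S"
      "complete R (A \<inter> S \<times> UNIV)" "wC C (A \<inter> S \<times> UNIV) \<le> wC C A"
      by (rule restrict_to_few_users[OF inst k2 A(1,2)])
    have "card (A \<inter> S \<times> UNIV) \<le> card S * card R" by (rule card_restrict_users_le[OF A(1) S(2) finR])
    also have "\<dots> \<le> 3 * tau C * (card R choose 2) * card R" using S(1) by simp
    also have "\<dots> < card A" using A(3) by (simp add: ac_simps)
    finally show "\<exists>A'. A' \<subseteq> A \<and> complete R A' \<and> card A' < card A \<and> wC C A' \<le> wC C A"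
      using S(3,4) by blast
  qed
next
  fix A assume A: "A \<subseteq> U \<times> R" "complete R A"
  obtain S where S: "card S \<le> 3 * tau C * (card R choose 2)" "finite S"
    "complete R (A \<inter> S \<times> UNIV)" "wC C (A \<inter> S \<times> UNIV) \<le> wC C A"
    by (rule restrict_to_few_users[OF inst k2 A])
  then show "\<exists>A'. A' \<subseteq> A \<and> complete R A'
                 \<and> card {u. resOf A' u \<noteq> {}} \<le> 3 * tau C * (card R choose 2)
                 \<and> wC C A' \<le> wC C A"
    using card_users_restrict_users_le[OF S(2), of A] by (intro exI[of _ "A \<inter> S \<times> UNIV"]) auto
qed

end
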